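(* Let $g\colon(0,1)\to\mathbb{R}$ be a continuous, strictly increasing function such that $g(1-a)=-g(a)$ for all $a\in(0,1)$ and $\lim_{a\to0^+}g(a)=-\infty$, and let $J(a,b)=g^{-1}\bigl(g(a)-g(b)\bigr)$ for $(a,b)\in S=(0,1)\times(0,1)$. If $g$ is continuously differentiable on $(0,1)$ with $g'$ never equal to $0$, then $J$ is differentiable on $S$. Conversely, if $J$ is differentiable on $S$, then $g$ is differentiable on $(0,1)$ and $g'$ is never $0$. *)

theory Defs
  imports "HOL-Analysis.Analysis"
begin

definition J_map :: "(real \<Rightarrow> real) \<Rightarrow> real \<times> real \<Rightarrow> real" where
  "J_map g = (\<lambda>(a, b). inv_into {0<..<1} g (g a - g b))"

end

theory Submission
  imports Defs
begin

text \<open>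
  Write \<open>\<psi>\<close> for the inverse of \<open>g\<close>, so that \<open>J(a, b) = \<psi> (g a - g b)\<close>. If \<open>g\<close> is
  differentiable with \<open>g' \<noteq> 0\<close>, then \<open>\<psi>\<close> is differentiable by the inverse function theorem and
  \<open>J\<close> is a composite of differentiable maps.

  Conversely, the sections \<open>y \<mapsto> \<psi> (g y + t)\<close> of \<open>J\<close> are differentiable at \<open>e = \<psi> 0\<close>, which
  says that the continuous functions \<open>q\<^sub>h(t) = (\<psi>(t + h) - \<psi> t) / (\<psi> h - \<psi> 0)\<close> converge
  pointwise as \<open>h \<rightarrow> 0\<close>. By Baire's theorem they are uniformly bounded on some interval \<open>[a, b]\<close>
  for small \<open>h\<close>, so by dominated convergence their integrals over \<open>[a, b]\<close> converge. The integral
  of the numerator is \<open>h (\<psi> b - \<psi> a) + o(h)\<close> with \<open>\<psi> b \<noteq> \<psi> a\<close>, hence \<open>h / (\<psi> h - \<psi> 0)\<close>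
  converges, i.e. \<open>g\<close> is differentiable at \<open>e\<close>. The sections of \<open>J\<close> and the chain rule then
  carry differentiability from one point to any other, and a vanishing derivative at one point
  would make \<open>g' = 0\<close> everywhere, contradicting injectivity.
\<close>

lemma connected_image_eq_UNIV:
  fixes g :: "'a::topological_space \<Rightarrow> real"
  assumes "continuous_on S g" "connected S"
    and below: "\<And>y. \<exists>x\<in>S. g x \<le> y" and above: "\<And>y. \<exists>x\<in>S. y \<le> g x"
  shows "g ` S = UNIV"
proof -
  have conn: "connected (g ` S)"
    using assms(1,2) by (rule connected_continuous_image)
  have "y \<in> g ` S" for y
  proof -
    obtain a b where "a \<in> S" "g a \<le> y" "b \<in> S" "y \<le> g b"
      using below above by blast
    then show ?thesis
      using conn unfolding connected_iff_interval by blast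
  qed
  then show ?thesis by auto
qed

lemma odd_unbounded_image_eq_UNIV:
  fixes g :: "real \<Rightarrow> real"
  assumes cont: "continuous_on {0<..<1} g"
    and symm: "\<forall>a\<in>{0<..<1}. g (1 - a) = - g a"
    and lim0: "filterlim g at_bot (at_right 0)"
  shows "g ` {0<..<1} = UNIV"
proof -
  have below: "\<exists>x\<in>{0<..<1}. g x \<le> y" for y
  proof -
    have "\<forall>\<^sub>F x in at_right 0. g x \<le> y"
      using lim0 by (simp add: filterlim_at_bot)
    moreover have "\<forall>\<^sub>F x in at_right (0::real). x \<in> {0<..<1}"
      by (rule eventually_at_right_real) simp
    ultimately have "\<forall>\<^sub>F x in at_right 0. g x \<le> y \<and> x \<in> {0<..<1}"
      by (rule eventually_conj)
    then have "\<exists>x. g x \<le> y \<and> x \<in> {0<..<1}"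
      by (rule eventually_happens'[rotated]) simp
    then show ?thesis by blast
  qed
  have above: "\<exists>x\<in>{0<..<1}. y \<le> g x" for y
  proof -
    obtain x where "x \<in> {0<..<1}" "g x \<le> - y"
      using below by blast
    then show ?thesis
      using symm by (intro bexI[of _ "1 - x"]) auto
  qed
  show ?thesis
    using connected_image_eq_UNIV[OF cont _ below above] by simp
qed

lemma closed_cover_interior_nonempty:
  fixes E :: "nat \<Rightarrow> 'a::{real_normed_vector,heine_borel} set"
  assumes closed: "\<And>n. closed (E n)" and cover: "\<And>x. \<exists>n. x \<in> E n"
  obtains n where "interior (E n) \<noteq> {}"
proof (rule ccontr)
  assume "\<not> thesis"
  then have empty_interior: "interior (E n) = {}" for n
    using that by blast
  have "UNIV \<subseteq> closure (\<Inter> (range (\<lambda>n. - E n)))"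
  proof (rule Baire)
    fix T assume "T \<in> range (\<lambda>n. - E n)"
    then obtain n where "T = - E n" by blast
    then show "openin (top_of_set UNIV) T \<and> UNIV \<subseteq> closure T"
      using closed[of n] empty_interior[of n] by (simp add: closure_complement open_Compl)
  qed auto
  moreover have "\<Inter> (range (\<lambda>n. - E n)) = {}"
    using cover by auto
  ultimately show False by simp
qed

lemma pointwise_convergent_imp_eventually_bounded_on_interval:
  fixes q :: "'a::metric_space \<Rightarrow> real \<Rightarrow> real"
  assumes cont: "\<And>h. continuous_on UNIV (q h)"
    and lim: "\<And>t. ((\<lambda>h. q h t) \<longlongrightarrow> Q t) (at c)"
  obtains a b B where "a < b" "\<forall>\<^sub>F h in at c. \<forall>t\<in>{a..b}. \<bar>q h t\<bar> \<le> B"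
proof -
  define E where
    "E n = {t. \<forall>h. h \<noteq> c \<and> dist h c < 1 / real (Suc n) \<longrightarrow> \<bar>q h t\<bar> \<le> real n}" for n
  have closed_E: "closed (E n)" for n
  proof -
    have "E n = (\<Inter>h\<in>{h. h \<noteq> c \<and> dist h c < 1 / real (Suc n)}. {t. \<bar>q h t\<bar> \<le> real n})"
      by (auto simp: E_def)
    moreover have "closed {t. \<bar>q h t\<bar> \<le> real n}" for h
      by (intro closed_Collect_le continuous_on_rabs cont continuous_on_const)
    ultimately show ?thesis by auto
  qed
  have E_cover: "\<exists>n. t \<in> E n" for t
  proof -
    have "\<forall>\<^sub>F h in at c. \<bar>q h t\<bar> < \<bar>Q t\<bar> + 1"
      using tendsto_rabs[OF lim[of t]] by (rule order_tendstoD) simp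
    then obtain d where d: "d > 0"
      and near: "\<And>h. h \<noteq> c \<Longrightarrow> dist h c < d \<Longrightarrow> \<bar>q h t\<bar> < \<bar>Q t\<bar> + 1"
      by (auto simp: eventually_at)
    obtain n :: nat where n: "real n \<ge> max (\<bar>Q t\<bar> + 1) (1 / d)"
      using real_arch_simple by blast
    then have "1 / d < real (Suc n)" by simp
    then have "1 / real (Suc n) < d"
      using d by (simp add: field_simps)
    then have "t \<in> E n"
      using near n by (fastforce simp: E_def)
    then show ?thesis by blast
  qed
  obtain n where "interior (E n) \<noteq> {}"
    using closed_cover_interior_nonempty[OF closed_E E_cover] by blast
  then obtain t0 r where r: "r > 0" "ball t0 r \<subseteq> E n"
    by (auto simp: mem_interior)
  have interval: "{t0 - r/2..t0 + r/2} \<subseteq> E n"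
    using r by (auto simp: dist_real_def abs_if intro!: subsetD[OF r(2)])
  have "\<forall>\<^sub>F h in at c. \<forall>t\<in>{t0 - r/2..t0 + r/2}. \<bar>q h t\<bar> \<le> real n"
    unfolding eventually_at
    by (rule exI[of _ "1 / real (Suc n)"]) (use interval in \<open>auto simp: E_def\<close>)
  with r(1) show ?thesis
    by (intro that) auto
qed

lemma integral_tendsto_dominated:
  fixes q :: "'a::metric_space \<Rightarrow> real \<Rightarrow> real"
  assumes int: "\<And>h. q h integrable_on {a..b}"
    and bound: "\<forall>\<^sub>F h in at c. \<forall>t\<in>{a..b}. \<bar>q h t\<bar> \<le> B"
    and lim: "\<And>t. t \<in> {a..b} \<Longrightarrow> ((\<lambda>h. q h t) \<longlongrightarrow> Q t) (at c)"
  shows "((\<lambda>h. integral {a..b} (q h)) \<longlongrightarrow> integral {a..b} Q) (at c)"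
proof -
  obtain d where d: "d > 0"
    and bound_d: "\<And>h t. h \<noteq> c \<Longrightarrow> dist h c < d \<Longrightarrow> t \<in> {a..b} \<Longrightarrow> \<bar>q h t\<bar> \<le> B"
    using bound by (auto simp: eventually_at)
  have "((\<lambda>h. integral {a..b} (q h)) \<longlongrightarrow> integral {a..b} Q) (at c within ball c d)"
    unfolding tendsto_at_iff_sequentially
  proof (intro allI impI)
    fix X :: "nat \<Rightarrow> 'a"
    assume X: "\<forall>i. X i \<in> ball c d - {c}" and "X \<longlonglongrightarrow> c"
    then have X_at: "filterlim X (at c) sequentially"
      unfolding filterlim_at by (simp add: always_eventually)
    have "(\<lambda>k. integral {a..b} (q (X k))) \<longlonglongrightarrow> integral {a..b} Q"
    proof (rule dominated_convergence(2)[where h="\<lambda>_. B"])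
      show "norm (q (X k) t) \<le> B" if "t \<in> {a..b}" for k t
        using bound_d X that by (auto simp: dist_commute)
      show "(\<lambda>k. q (X k) t) \<longlonglongrightarrow> Q t" if "t \<in> {a..b}" for t
        using filterlim_compose[OF lim[OF that] X_at] .
    qed (auto intro: int)
    then show "((\<lambda>h. integral {a..b} (q h)) \<circ> X) \<longlonglongrightarrow> integral {a..b} Q"
      by (simp add: o_def)
  qed
  moreover have "at c within ball c d = at c"
    using d by (intro at_within_open) auto
  ultimately show ?thesis by simp
qed

lemma pointwise_convergent_imp_integral_convergent_on_interval:
  fixes q :: "'a::metric_space \<Rightarrow> real \<Rightarrow> real"
  assumes cont: "\<And>h. continuous_on UNIV (q h)"
    and lim: "\<And>t. ((\<lambda>h. q h t) \<longlongrightarrow> Q t) (at c)"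
  obtains a b where "a < b" "((\<lambda>h. integral {a..b} (q h)) \<longlongrightarrow> integral {a..b} Q) (at c)"
proof -
  obtain a b B where "a < b" and bound: "\<forall>\<^sub>F h in at c. \<forall>t\<in>{a..b}. \<bar>q h t\<bar> \<le> B"
    using pointwise_convergent_imp_eventually_bounded_on_interval[OF cont lim] by blast
  moreover have "q h integrable_on {a..b}" for h
    by (rule integrable_continuous_interval, rule continuous_on_subset[OF cont]) simp
  ultimately show ?thesis
    using integral_tendsto_dominated lim that by blast
qed

lemma has_integral_translate:
  fixes f :: "real \<Rightarrow> 'b::real_normed_vector"
  assumes "f integrable_on {a + h..b + h}"
  shows "((\<lambda>t. f (t + h)) has_integral integral {a + h..b + h} f) {a..b}"
proof -
  have "(f has_integral integral {a + h..b + h} f) (cbox (a + h) (b + h))"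
    using assms by (simp add: integrable_integral)
  from has_integral_affinity'[OF this, of 1 h] show ?thesis
    by simp
qed

lemma integral_translate_difference_quotient_tendsto:
  fixes \<psi> :: "real \<Rightarrow> real"
  assumes cont: "continuous_on UNIV \<psi>" and "a \<le> b"
  shows "((\<lambda>h. integral {a..b} (\<lambda>t. \<psi> (t + h) - \<psi> t) / h) \<longlongrightarrow> \<psi> b - \<psi> a) (at 0)"
proof -
  define \<Psi> where "\<Psi> x = integral {a - 1..x} \<psi>" for x
  have int: "\<psi> integrable_on {u..v}" for u v
    by (rule integrable_continuous_interval, rule continuous_on_subset[OF cont]) simp
  have \<Psi>_deriv: "(\<Psi> has_real_derivative \<psi> x) (at x)" if "a - 1 < x" for x
  proof -
    have "(\<Psi> has_real_derivative \<psi> x) (at x within {a - 1..x + 1})"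
      unfolding \<Psi>_def
      by (rule integral_has_real_derivative, rule continuous_on_subset[OF cont]) (use that in auto)
    then show ?thesis
      using that by (simp add: at_within_Icc_at)
  qed
  have \<Psi>_combine: "\<Psi> u + integral {u..v} \<psi> = \<Psi> v" if "a - 1 \<le> u" "u \<le> v" for u v
    unfolding \<Psi>_def
    by (rule Henstock_Kurzweil_Integration.integral_combine) (use that int in auto)
  have translate_diff: "integral {a..b} (\<lambda>t. \<psi> (t + h) - \<psi> t)
      = integral {a + h..b + h} \<psi> - integral {a..b} \<psi>" for h
    by (intro integral_unique has_integral_diff has_integral_translate integrable_integral int)
  have "\<forall>\<^sub>F h in at 0. (\<Psi> (b + h) - \<Psi> b) / h - (\<Psi> (a + h) - \<Psi> a) / h
      = integral {a..b} (\<lambda>t. \<psi> (t + h) - \<psi> t) / h"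
    unfolding eventually_at
  proof (intro exI[of _ 1] conjI ballI impI)
    fix h :: real assume "h \<noteq> 0 \<and> dist h 0 < 1"
    then have "a - 1 \<le> a + h" by auto
    then have "integral {a..b} (\<lambda>t. \<psi> (t + h) - \<psi> t) = (\<Psi> (b + h) - \<Psi> b) - (\<Psi> (a + h) - \<Psi> a)"
      using \<Psi>_combine[of "a + h" "b + h"] \<Psi>_combine[of a b] \<open>a \<le> b\<close>
      by (simp add: translate_diff)
    then show "(\<Psi> (b + h) - \<Psi> b) / h - (\<Psi> (a + h) - \<Psi> a) / h
        = integral {a..b} (\<lambda>t. \<psi> (t + h) - \<psi> t) / h"
      by (simp add: diff_divide_distrib)
  qed simp
  moreover have "((\<lambda>h. (\<Psi> (b + h) - \<Psi> b) / h - (\<Psi> (a + h) - \<Psi> a) / h) \<longlongrightarrow> \<psi> b - \<psi> a) (at 0)"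
    using \<Psi>_deriv[of b] \<Psi>_deriv[of a] \<open>a \<le> b\<close> by (intro tendsto_diff) (simp_all add: DERIV_def)
  ultimately show ?thesis
    by (rule Lim_transform_eventually[rotated])
qed

lemma convergent_quotient_if_translate_quotients_convergent:
  fixes \<psi> :: "real \<Rightarrow> real"
  assumes cont: "continuous_on UNIV \<psi>" and inj: "inj \<psi>"
    and lim: "\<And>t. \<exists>L. ((\<lambda>h. (\<psi> (t + h) - \<psi> t) / (\<psi> h - \<psi> 0)) \<longlongrightarrow> L) (at 0)"
  shows "\<exists>K. ((\<lambda>h. h / (\<psi> h - \<psi> 0)) \<longlongrightarrow> K) (at 0)"
proof -
  define q where "q h t = (\<psi> (t + h) - \<psi> t) / (\<psi> h - \<psi> 0)" for h t
  have "\<forall>t. \<exists>L. ((\<lambda>h. q h t) \<longlongrightarrow> L) (at 0)"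
    using lim by (simp add: q_def)
  then obtain Q where Q: "\<And>t. ((\<lambda>h. q h t) \<longlongrightarrow> Q t) (at 0)"
    by (metis choice)
  have cont_q: "continuous_on UNIV (q h)" for h
  proof -
    have "q h = (\<lambda>t. (\<psi> (t + h) - \<psi> t) * inverse (\<psi> h - \<psi> 0))"
      by (simp add: q_def divide_inverse fun_eq_iff)
    moreover have "continuous_on UNIV (\<lambda>t. \<psi> (t + h))"
      by (rule continuous_on_compose2[OF cont]) (auto intro: continuous_intros)
    ultimately show ?thesis
      by (metis continuous_on_mult_right continuous_on_diff cont)
  qed
  obtain a b where "a < b"
    and lim_I: "((\<lambda>h. integral {a..b} (q h)) \<longlongrightarrow> integral {a..b} Q) (at 0)"
    using pointwise_convergent_imp_integral_convergent_on_interval[OF cont_q Q] by blast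
  \<comment> \<open>Integrating over \<open>[a, b]\<close> replaces the numerator of \<open>q h\<close> by \<open>A h\<close>, which is asymptotic to \<open>h (\<psi> b - \<psi> a)\<close>.\<close>
  define A where "A h = integral {a..b} (\<lambda>t. \<psi> (t + h) - \<psi> t)" for h
  have lim_A: "((\<lambda>h. A h / h) \<longlongrightarrow> \<psi> b - \<psi> a) (at 0)"
    unfolding A_def using cont \<open>a < b\<close> by (intro integral_translate_difference_quotient_tendsto) auto
  have "\<psi> b - \<psi> a \<noteq> 0"
    using inj \<open>a < b\<close> by (metis eq_iff_diff_eq_0 injD less_irrefl)
  with lim_I lim_A have "((\<lambda>h. integral {a..b} (q h) / (A h / h))
      \<longlongrightarrow> integral {a..b} Q / (\<psi> b - \<psi> a)) (at 0)"
    by (intro tendsto_divide)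
  moreover have "\<forall>\<^sub>F h in at 0. integral {a..b} (q h) / (A h / h) = h / (\<psi> h - \<psi> 0)"
  proof -
    have "\<forall>\<^sub>F h in at 0. A h / h \<noteq> 0"
      using lim_A \<open>\<psi> b - \<psi> a \<noteq> 0\<close> by (rule tendsto_imp_eventually_ne)
    moreover have "\<forall>\<^sub>F h in at (0::real). h \<noteq> 0"
      by (auto simp: eventually_at intro: exI[of _ 1])
    ultimately show ?thesis
    proof eventually_elim
      case (elim h)
      then have "\<psi> h \<noteq> \<psi> 0"
        using inj by (auto dest: injD)
      moreover have "integral {a..b} (q h) = A h / (\<psi> h - \<psi> 0)"
        unfolding q_def A_def by (rule integral_divide)
      ultimately show ?case
        using elim by (simp add: divide_simps)
    qed
  qed
  ultimately have "((\<lambda>h. h / (\<psi> h - \<psi> 0)) \<longlongrightarrow> integral {a..b} Q / (\<psi> b - \<psi> a)) (at 0)"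
    by (rule Lim_transform_eventually)
  then show ?thesis ..
qed

locale continuous_bijection_to_reals =
  fixes g :: "real \<Rightarrow> real"
  assumes cont: "continuous_on {0<..<1} g"
    and inj: "inj_on g {0<..<1}"
    and surj: "g ` {0<..<1} = UNIV"
begin

abbreviation ginv :: "real \<Rightarrow> real" where
  "ginv \<equiv> inv_into {0<..<1} g"

lemma ginv_in: "ginv y \<in> {0<..<1}"
  using surj by (metis UNIV_I inv_into_into)

lemma g_ginv [simp]: "g (ginv y) = y"
  using surj by (simp add: f_inv_into_f)

lemma ginv_g [simp]: "x \<in> {0<..<1} \<Longrightarrow> ginv (g x) = x"
  using inj by simp

lemma inj_ginv: "inj ginv"
  by (metis g_ginv injI)

lemma isCont_g: "x \<in> {0<..<1} \<Longrightarrow> isCont g x"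
  using cont by (simp add: continuous_on_eq_continuous_at)

lemma isCont_ginv: "isCont ginv y"
proof -
  define x where "x = ginv y"
  have x: "x \<in> {0<..<1}"
    unfolding x_def by (rule ginv_in)
  define d where "d = min x (1 - x) / 2"
  have d: "d > 0"
    using x by (auto simp: d_def)
  have near_x: "\<bar>z - x\<bar> \<le> d \<Longrightarrow> z \<in> {0<..<1}" for z
    using x by (auto simp: d_def abs_if split: if_split_asm)
  have "isCont ginv (g x)"
    by (rule isCont_inverse_function[OF d]) (use near_x isCont_g in auto)
  then show ?thesis
    by (simp add: x_def)
qed

lemma continuous_on_ginv: "continuous_on UNIV ginv"
  using isCont_ginv by (blast intro: continuous_at_imp_continuous_on)

lemma filterlim_ginv_at: "filterlim ginv (at (ginv y)) (at y)"
proof (rule filterlim_atI)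
  show "(ginv \<longlongrightarrow> ginv y) (at y)"
    using isCont_ginv[of y] by (simp add: isCont_def)
  show "\<forall>\<^sub>F h in at y. ginv h \<noteq> ginv y"
    using inj_ginv by (auto simp: eventually_at dest: injD intro: exI[of _ 1])
qed

lemma filterlim_g_at:
  assumes x: "x \<in> {0<..<1}"
  shows "filterlim g (at (g x)) (at x)"
proof (rule filterlim_atI)
  show "(g \<longlongrightarrow> g x) (at x)"
    using isCont_g[OF x] by (simp add: isCont_def)
  have "\<forall>\<^sub>F y in at x. y \<in> {0<..<1} - {x}"
    using x by (intro eventually_at_in_open) auto
  then show "\<forall>\<^sub>F y in at x. g y \<noteq> g x"
    by eventually_elim (use x inj in \<open>auto dest: inj_onD\<close>)
qed

lemma J_map_eq: "J_map g = (\<lambda>p. ginv (g (fst p) - g (snd p)))"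
  by (auto simp: J_map_def fun_eq_iff)

lemma differentiable_ginv:
  assumes "g differentiable (at (ginv y))" and "deriv g (ginv y) \<noteq> 0"
  shows "ginv differentiable (at y)"
proof -
  have "DERIV g (ginv y) :> deriv g (ginv y)"
    using assms(1) by (simp add: DERIV_deriv_iff_real_differentiable)
  then have "DERIV ginv y :> inverse (deriv g (ginv y))"
    by (rule DERIV_inverse_function[where a = "y - 1" and b = "y + 1"])
      (use assms(2) isCont_ginv ginv_in in auto)
  then show ?thesis
    by (auto simp: real_differentiable_def)
qed

lemma J_map_differentiable_on:
  assumes diff: "\<forall>x\<in>{0<..<1}. g differentiable (at x)"
    and nonzero: "\<forall>x\<in>{0<..<1}. deriv g x \<noteq> 0"
  shows "J_map g differentiable_on ({0<..<1} \<times> {0<..<1})"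
proof -
  have g_comp: "(\<lambda>p. g (f p)) differentiable (at p)"
    if "f p \<in> {0<..<1}" and "bounded_linear f" for f :: "real \<times> real \<Rightarrow> real" and p
    using differentiable_compose[of g f p UNIV] bounded_linear_imp_differentiable[OF that(2)] diff that(1)
    by auto
  have "(\<lambda>p. ginv (g (fst p) - g (snd p))) differentiable (at p)"
    if p: "p \<in> {0<..<1} \<times> {0<..<1}" for p
  proof -
    have "ginv differentiable (at (g (fst p) - g (snd p)))"
      using diff nonzero ginv_in by (intro differentiable_ginv) auto
    moreover have "(\<lambda>p. g (fst p) - g (snd p)) differentiable (at p)"
      using p by (intro differentiable_diff g_comp bounded_linear_fst bounded_linear_snd) auto
    ultimately show ?thesis
      by (rule differentiable_compose)
  qed
  then show ?thesis
    unfolding differentiable_on_def J_map_eq by (auto intro: differentiable_at_withinI)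
qed

context
  assumes J_diff: "J_map g differentiable_on ({0<..<1} \<times> {0<..<1})"
begin

lemma differentiable_J_map_section:
  assumes "x \<in> {0<..<1}" and "w \<in> {0<..<1}"
  shows "(\<lambda>y. ginv (g y - g w)) differentiable (at x)"
proof -
  have "J_map g differentiable (at (x, w))"
    using J_diff assms by (subst (asm) differentiable_on_eq_differentiable_at) (auto simp: open_Times)
  moreover have "(\<lambda>y. (y, w)) differentiable (at x)"
    by (intro differentiable_Pair differentiable_ident differentiable_const)
  ultimately have "(\<lambda>y. J_map g (y, w)) differentiable (at x)"
    by (rule differentiable_compose)
  then show ?thesis
    by (simp add: J_map_eq)
qed

lemma has_real_derivative_transport:
  assumes x: "x \<in> {0<..<1}" and z: "z \<in> {0<..<1}" and D: "(g has_real_derivative D) (at z)"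
  obtains P where "(g has_real_derivative D * P) (at x)"
proof -
  \<comment> \<open>Since \<open>J (x, w) = z\<close>, writing \<open>g y = g (J (y, w)) + g w\<close> the chain rule moves the
    derivative from \<open>z\<close> to \<open>x\<close>.\<close>
  define w where "w = ginv (g x - g z)"
  have w: "w \<in> {0<..<1}"
    unfolding w_def by (rule ginv_in)
  have gw: "g w = g x - g z"
    by (simp add: w_def)
  obtain P where P: "((\<lambda>y. ginv (g y - g w)) has_real_derivative P) (at x)"
    using differentiable_J_map_section[OF x w] by (auto simp: real_differentiable_def)
  have "ginv (g x - g w) = z"
    using gw z by simp
  then have "(g has_real_derivative D) (at (ginv (g x - g w)))"
    using D by simp
  from DERIV_chain2[OF this P] have "((\<lambda>y. g y - g w) has_real_derivative D * P) (at x)"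
    by simp
  then have "((\<lambda>y. g y - g w + g w) has_real_derivative D * P + 0) (at x)"
    by (intro DERIV_add DERIV_const)
  then show ?thesis
    by (intro that) simp
qed

lemma translate_quotients_ginv_convergent:
  "\<exists>L. ((\<lambda>h. (ginv (t + h) - ginv t) / (ginv h - ginv 0)) \<longlongrightarrow> L) (at 0)"
proof -
  \<comment> \<open>Differentiate the section of \<open>J\<close> at \<open>w = ginv (- t)\<close> and substitute \<open>y = ginv h\<close>.\<close>
  obtain L where "((\<lambda>y. ginv (g y + t)) has_real_derivative L) (at (ginv 0))"
    using differentiable_J_map_section[OF ginv_in ginv_in[of "- t"]]
    by (auto simp: real_differentiable_def)
  then have "((\<lambda>y. (ginv (g y + t) - ginv (g (ginv 0) + t)) / (y - ginv 0)) \<longlongrightarrow> L) (at (ginv 0))"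
    by (simp add: has_field_derivative_iff)
  from filterlim_compose[OF this filterlim_ginv_at[of 0]] show ?thesis
    by (auto simp: add.commute)
qed

lemma has_real_derivative_at_ginv_0:
  obtains K where "(g has_real_derivative K) (at (ginv 0))"
proof -
  define e where "e = ginv 0"
  have e: "e \<in> {0<..<1}"
    unfolding e_def by (rule ginv_in)
  obtain K where "((\<lambda>h. h / (ginv h - e)) \<longlongrightarrow> K) (at 0)"
    using convergent_quotient_if_translate_quotients_convergent[OF continuous_on_ginv inj_ginv
        translate_quotients_ginv_convergent]
    by (auto simp: e_def)
  moreover have "filterlim g (at 0) (at e)"
    using filterlim_g_at[OF e] by (simp add: e_def)
  ultimately have "((\<lambda>y. g y / (ginv (g y) - e)) \<longlongrightarrow> K) (at e)"
    by (rule filterlim_compose)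
  moreover have "\<forall>\<^sub>F y in at e. g y / (ginv (g y) - e) = (g y - g e) / (y - e)"
    using eventually_at_in_open'[of "{0<..<1}" e] e by (auto elim!: eventually_mono simp: e_def)
  ultimately have "((\<lambda>y. (g y - g e) / (y - e)) \<longlongrightarrow> K) (at e)"
    by (rule Lim_transform_eventually)
  then show ?thesis
    by (intro that[of K]) (simp add: has_field_derivative_iff e_def)
qed

lemma g_differentiable_if_J_differentiable:
  assumes "x \<in> {0<..<1}"
  shows "g differentiable (at x)"
proof -
  obtain K where "(g has_real_derivative K) (at (ginv 0))"
    by (rule has_real_derivative_at_ginv_0)
  then obtain P where "(g has_real_derivative K * P) (at x)"
    using has_real_derivative_transport[OF assms ginv_in] by blast
  then show ?thesis
    by (auto simp: real_differentiable_def)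
qed

lemma deriv_g_nonzero_if_J_differentiable:
  assumes x: "x \<in> {0<..<1}"
  shows "deriv g x \<noteq> 0"
proof
  assume "deriv g x = 0"
  then have "(g has_real_derivative 0) (at x)"
    using g_differentiable_if_J_differentiable[OF x] by (metis DERIV_deriv_iff_real_differentiable)
  then have "(g has_real_derivative 0) (at y)" if "y \<in> {0<..<1}" for y
    using has_real_derivative_transport[OF that x] by (metis mult_zero_left)
  then obtain c where "\<forall>y\<in>{0<..<1}. g y = c"
    by (metis has_field_derivative_zero_constant convex_real_interval(8) has_field_derivative_at_within)
  then have "g (1/4) = g (3/4)"
    by simp
  then show False
    using inj by (auto dest: inj_onD)
qed

end

end


theorem proposition5p7:
  fixes g :: "real \<Rightarrow> real"
  assumes cont: "continuous_on {0<..<1} g"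
    and mono: "strict_mono_on {0<..<1} g"
    and symm: "\<forall>a\<in>{0<..<1}. g (1 - a) = - g a"
    and lim0: "filterlim g at_bot (at_right 0)"
  shows "((\<forall>x\<in>{0<..<1}. g differentiable (at x)) \<and> continuous_on {0<..<1} (deriv g)
            \<and> (\<forall>x\<in>{0<..<1}. deriv g x \<noteq> 0)
          \<longrightarrow> J_map g differentiable_on ({0<..<1} \<times> {0<..<1}))
       \<and> (J_map g differentiable_on ({0<..<1} \<times> {0<..<1})
          \<longrightarrow> (\<forall>x\<in>{0<..<1}. g differentiable (at x)) \<and> (\<forall>x\<in>{0<..<1}. deriv g x \<noteq> 0))"
proof -
  interpret continuous_bijection_to_reals g
  proof
    show "continuous_on {0<..<1} g"
      by (fact cont)
    show "inj_on g {0<..<1}"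
      using mono by (rule strict_mono_on_imp_inj_on)
    show "g ` {0<..<1} = UNIV"
      using cont symm lim0 by (rule odd_unbounded_image_eq_UNIV)
  qed
  show ?thesis
    using J_map_differentiable_on g_differentiable_if_J_differentiable
      deriv_g_nonzero_if_J_differentiable
    by blast
qed

end
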